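(* Let $\mathbb{F}\in\{\mathbb{R},\mathbb{C}\}$. If $S\in\mathsf{GL}_m(\mathbb{F})$ and $T\in\mathsf{GL}_n(\mathbb{F})$ are Perron similarities, then $S\otimes T$ is a Perron similarity.
   Context: An invertible matrix $S\in\mathsf{GL}_n(\mathbb{F})$ is called a Perron similarity if there is an index $i\in\{1,\ldots,n\}$ such that the column $Se_i$ and the row $e_i^\top S^{-1}$ are both entrywise nonnegative (real) or both entrywise nonpositive (real); here $e_i$ is the $i$-th standard basis vector. $\otimes$ denotes the Kronecker product, $A\otimes B=[a_{ij}B]$ blockwise. *)

theory Defs
  imports "HOL-Analysis.Analysis" "HOL-Library.Complex_Order"
begin

text \<open>For complex numbers the order is that of HOL-Library.Complex_Order:
  0 \<le> z iff z is real and nonnegative; z \<le> 0 iff z is real and nonpositive.\<close>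

definition perron_similarity :: "('a::{semiring_1,ord})^'n^'n \<Rightarrow> bool" where
  "perron_similarity S \<longleftrightarrow> invertible S \<and>
     (\<exists>i. ((\<forall>j. 0 \<le> S $ j $ i) \<and> (\<forall>j. 0 \<le> matrix_inv S $ i $ j)) \<or>
          ((\<forall>j. S $ j $ i \<le> 0) \<and> (\<forall>j. matrix_inv S $ i $ j \<le> 0)))"

text \<open>Kronecker product; row/column index (i,k) corresponds to (i-1)n+k.\<close>
definition kronecker :: "('a::times)^'m^'m \<Rightarrow> 'a^'n^'n \<Rightarrow> 'a^('m \<times> 'n)^('m \<times> 'n)" where
  "kronecker A B = (\<chi> p q. A $ fst p $ fst q * B $ snd p $ snd q)"

end

theory Submission
  imports Defs
begin

text \<open>By the mixed-product property, \<open>(S \<otimes> T)\<inverse> = S\<inverse> \<otimes> T\<inverse>\<close>. So if index \<open>i\<close>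
  witnesses that \<open>S\<close> is a Perron similarity, with sign \<open>\<epsilon>\<close>, and \<open>k\<close> does so for \<open>T\<close>,
  with sign \<open>\<delta>\<close>, then column \<open>(i,k)\<close> of \<open>S \<otimes> T\<close> and row \<open>(i,k)\<close> of its inverse
  have entries \<open>S\<^sub>j\<^sub>i T\<^sub>l\<^sub>k\<close> and \<open>S\<inverse>\<^sub>i\<^sub>j T\<inverse>\<^sub>k\<^sub>l\<close>, all of sign \<open>\<epsilon>\<delta>\<close>.\<close>

lemma kronecker_mult:
  fixes A C :: "'a::comm_semiring_1^'m^'m" and B D :: "'a^'n^'n"
  shows "kronecker A B ** kronecker C D = kronecker (A ** C) (B ** D)"
proof -
  have "(\<Sum>r\<in>UNIV. A $ fst p $ fst r * B $ snd p $ snd r * (C $ fst r $ fst q * D $ snd r $ snd q))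
      = (\<Sum>i\<in>UNIV. A $ fst p $ i * C $ i $ fst q) * (\<Sum>k\<in>UNIV. B $ snd p $ k * D $ k $ snd q)"
    for p q :: "'m \<times> 'n"
  proof -
    have "(\<Sum>i\<in>UNIV. A $ fst p $ i * C $ i $ fst q) * (\<Sum>k\<in>UNIV. B $ snd p $ k * D $ k $ snd q)
        = (\<Sum>i\<in>UNIV. \<Sum>k\<in>UNIV. (A $ fst p $ i * C $ i $ fst q) * (B $ snd p $ k * D $ k $ snd q))"
      by (simp add: sum_product)
    also have "\<dots> = (\<Sum>r\<in>UNIV \<times> UNIV.
        (A $ fst p $ fst r * C $ fst r $ fst q) * (B $ snd p $ snd r * D $ snd r $ snd q))"
      by (subst sum.cartesian_product) (simp add: case_prod_beta)
    finally show ?thesis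
      by (simp add: ac_simps UNIV_Times_UNIV[symmetric] del: UNIV_Times_UNIV)
  qed
  then show ?thesis
    by (simp add: kronecker_def matrix_matrix_mult_def vec_eq_iff)
qed

lemma kronecker_mat_1:
  "kronecker (mat 1 :: 'a::comm_semiring_1^'m^'m) (mat 1 :: 'a^'n^'n) = mat 1"
  by (auto simp: kronecker_def mat_def vec_eq_iff prod_eq_iff)

lemma matrix_inv_inverse:
  fixes A :: "'a::semiring_1^'n^'n"
  assumes "invertible A"
  shows "A ** matrix_inv A = mat 1" and "matrix_inv A ** A = mat 1"
  using someI_ex[OF assms[unfolded invertible_def]] unfolding matrix_inv_def by simp_all

lemma matrix_inv_unique:
  fixes A B :: "'a::semiring_1^'n^'n"
  assumes "invertible A" and "A ** B = mat 1"
  shows "matrix_inv A = B"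
proof -
  have "matrix_inv A = (matrix_inv A ** A) ** B"
    using assms(2) by (simp add: matrix_mul_assoc[symmetric])
  then show ?thesis
    using matrix_inv_inverse(2)[OF assms(1)] by simp
qed

lemma
  fixes S :: "'a::comm_semiring_1^'m^'m" and T :: "'a^'n^'n"
  assumes "invertible S" and "invertible T"
  shows invertible_kronecker: "invertible (kronecker S T)"
    and matrix_inv_kronecker: "matrix_inv (kronecker S T) = kronecker (matrix_inv S) (matrix_inv T)"
proof -
  have right: "kronecker S T ** kronecker (matrix_inv S) (matrix_inv T) = mat 1"
    and left: "kronecker (matrix_inv S) (matrix_inv T) ** kronecker S T = mat 1"
    using matrix_inv_inverse[OF assms(1)] matrix_inv_inverse[OF assms(2)]
    by (simp_all add: kronecker_mult kronecker_mat_1)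
  then show inv: "invertible (kronecker S T)"
    unfolding invertible_def by blast
  show "matrix_inv (kronecker S T) = kronecker (matrix_inv S) (matrix_inv T)"
    using matrix_inv_unique[OF inv right] .
qed

definition sign_coherent :: "('a::{zero,ord})^'n \<Rightarrow> 'a^'n \<Rightarrow> bool" where
  "sign_coherent x y \<longleftrightarrow>
     (\<forall>j. 0 \<le> x $ j) \<and> (\<forall>j. 0 \<le> y $ j) \<or> (\<forall>j. x $ j \<le> 0) \<and> (\<forall>j. y $ j \<le> 0)"

lemma perron_similarity_iff_sign_coherent:
  "perron_similarity S \<longleftrightarrow>
     invertible S \<and> (\<exists>i. sign_coherent (column i S) (row i (matrix_inv S)))"
  by (simp add: perron_similarity_def sign_coherent_def column_def row_def)

lemma sign_coherent_kronecker:
  fixes S S' :: "'a::ordered_ring^'m^'m" and T T' :: "'a^'n^'n"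
  assumes "sign_coherent (column i S) (row i S')"
    and "sign_coherent (column k T) (row k T')"
  shows "sign_coherent (column (i, k) (kronecker S T)) (row (i, k) (kronecker S' T'))"
  using assms
  by (auto simp: sign_coherent_def column_def row_def kronecker_def
      intro: mult_nonneg_nonneg mult_nonpos_nonpos mult_nonneg_nonpos mult_nonpos_nonneg)

lemma perron_similarity_kronecker:
  fixes S :: "'a::{comm_ring_1,ordered_ring}^'m^'m" and T :: "'a^'n^'n"
  assumes "perron_similarity S" and "perron_similarity T"
  shows "perron_similarity (kronecker S T)"
proof -
  obtain i k where S: "invertible S" "sign_coherent (column i S) (row i (matrix_inv S))"
    and T: "invertible T" "sign_coherent (column k T) (row k (matrix_inv T))"
    using assms unfolding perron_similarity_iff_sign_coherent by blast
  have "sign_coherent (column (i, k) (kronecker S T)) (row (i, k) (matrix_inv (kronecker S T)))"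
    unfolding matrix_inv_kronecker[OF S(1) T(1)] using S(2) T(2) by (rule sign_coherent_kronecker)
  then show ?thesis
    unfolding perron_similarity_iff_sign_coherent
    using invertible_kronecker[OF S(1) T(1)] by blast
qed

theorem theorem4p2:
  shows "(\<forall>(S::real^'m^'m) (T::real^'n^'n).
            perron_similarity S \<and> perron_similarity T \<longrightarrow> perron_similarity (kronecker S T))
       \<and> (\<forall>(S::complex^'m^'m) (T::complex^'n^'n).
            perron_similarity S \<and> perron_similarity T \<longrightarrow> perron_similarity (kronecker S T))"
  by (blast intro: perron_similarity_kronecker)

end
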